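(* Let $V$ be a set of variables, $D$ a commutative semiring, and $E$ a $D$-module equipped with a map $\delta_E : V \to E$. Let $\mathrm{Dense}_{V,D}$ denote the $D$-module of all functions $V \to D$ (pointwise addition, zero function, $(d\bullet f)(v) = d\otimes f(v)$), equipped with $\delta_{\mathrm{Dense}}(v) = (w \mapsto 1 \text{ if } w = v \text{ else } 0)$. Suppose $\mathrm{rep} : \mathrm{Dense}_{V,D} \to E$ and $\mathrm{abs} : E \to \mathrm{Dense}_{V,D}$ form a Kronecker isomorphism. Then for every assignment $\mathit{var} : V \to D$ and every expression $e \in \mathrm{Expr}(V)$, $$\mathrm{fmap}\,\mathrm{abs}\,(\mathrm{abstractD}_E\,\mathit{var}\,e) = \mathrm{abstractD}_{\mathrm{Dense}}\,\mathit{var}\,e \quad\text{and}\quad \mathrm{abstractD}_E\,\mathit{var}\,e = \mathrm{fmap}\,\mathrm{rep}\,(\mathrm{abstractD}_{\mathrm{Dense}}\,\mathit{var}\,e).$$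
   Context: A (commutative) semiring $D$ has associative, commutative operations $\oplus,\otimes$ with neutral elements $0,1$, $\otimes$ distributing over $\oplus$, and $0$ annihilating. A $D$-module $E$ is a commutative monoid $(E,\oplus,0)$ with a scalar multiplication $\bullet : D\times E\to E$ satisfying $d\bullet 0 = 0$, $d\bullet(e\oplus e') = d\bullet e\oplus d\bullet e'$, $0\bullet e = 0$, $(d\oplus d')\bullet e = d\bullet e\oplus d'\bullet e$, $1\bullet e = e$, $(d\otimes d')\bullet e = d\bullet(d'\bullet e)$. $\mathrm{Expr}(V)$ is the free commutative semiring on $V$ (symbolic expressions built from variables $\mathrm{Var}\,v$, $0$, $1$, $+$, $\times$, quotiented by the semiring laws). For a semiring $S$ and $g : V\to S$, $\mathrm{eval}\,g : \mathrm{Expr}(V)\to S$ is the unique semiring homomorphism with $\mathrm{eval}\,g\,(\mathrm{Var}\,v) = g(v)$. Nagata numbers: for a $D$-module $E$, $D\ltimes E$ is the set of pairs $N(f,df)$ with $f\in D$, $df\in E$, a semiring with $0 = N(0,0)$, $1 = N(1,0)$, $N(f,df)\oplus N(g,dg) = N(f\oplus g, df\oplus dg)$, $N(f,df)\otimes N(g,dg) = N(f\otimes g, (f\bullet dg)\oplus(g\bullet df))$. For $h : E\to E'$, $\mathrm{fmap}\,h\,(N(f,df)) = N(f, h(df))$. For a $D$-module $E$ with $\delta_E : V\to E$, define $\mathrm{abstractD}_E\,\mathit{var} = \mathrm{eval}\,\mathit{gen} : \mathrm{Expr}(V)\to D\ltimes E$ where $\mathit{gen}(x) = N(\mathit{var}(x),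 \delta_E(x))$. A Kronecker homomorphism between $D$-modules $E_1,E_2$ with maps $\delta_{E_1},\delta_{E_2}: V\to E_i$ is a map $h:E_1\to E_2$ with $h(0)=0$, $h(x\oplus y) = h(x)\oplus h(y)$, $h(d\bullet m) = d\bullet h(m)$, $h(\delta_{E_1}(v)) = \delta_{E_2}(v)$. A Kronecker isomorphism is a pair of mutually inverse Kronecker homomorphisms. *)

theory Defs
  imports Main
begin

text \<open>Symbolic expressions over variables 'v (syntax trees; Expr(V) is their quotient by
  the commutative semiring laws, and eval is well defined on the quotient).\<close>
datatype 'v expr = Var 'v | EZero | EOne | EPlus "'v expr" "'v expr" | ETimes "'v expr" "'v expr"

fun eval :: "'s \<Rightarrow> 's \<Rightarrow> ('s \<Rightarrow> 's \<Rightarrow> 's) \<Rightarrow> ('s \<Rightarrow> 's \<Rightarrow> 's) \<Rightarrow> ('v \<Rightarrow> 's) \<Rightarrow> 'v expr \<Rightarrow> 's" where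
  "eval z u p t g (Var v) = g v"
| "eval z u p t g EZero = z"
| "eval z u p t g EOne = u"
| "eval z u p t g (EPlus a b) = p (eval z u p t g a) (eval z u p t g b)"
| "eval z u p t g (ETimes a b) = t (eval z u p t g a) (eval z u p t g b)"

definition is_module :: "'e \<Rightarrow> ('e \<Rightarrow> 'e \<Rightarrow> 'e) \<Rightarrow> ('d::comm_semiring_1 \<Rightarrow> 'e \<Rightarrow> 'e) \<Rightarrow> bool" where
  "is_module z p s \<longleftrightarrow>
     (\<forall>x y w. p (p x y) w = p x (p y w)) \<and>
     (\<forall>x y. p x y = p y x) \<and>
     (\<forall>x. p z x = x) \<and>
     (\<forall>d. s d z = z) \<and>
     (\<forall>d x y. s d (p x y) = p (s d x) (s d y)) \<and>
     (\<forall>x. s 0 x = z) \<and>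
     (\<forall>d d' x. s (d + d') x = p (s d x) (s d' x)) \<and>
     (\<forall>x. s 1 x = x) \<and>
     (\<forall>d d' x. s (d * d') x = s d (s d' x))"

text \<open>Nagata numbers D \<ltimes> E, represented as pairs N(f, df) = (f, df).\<close>
definition nzero :: "'e \<Rightarrow> 'd::comm_semiring_1 \<times> 'e" where
  "nzero z = (0, z)"
definition none :: "'e \<Rightarrow> 'd::comm_semiring_1 \<times> 'e" where
  "none z = (1, z)"
definition nplus :: "('e \<Rightarrow> 'e \<Rightarrow> 'e) \<Rightarrow> 'd::comm_semiring_1 \<times> 'e \<Rightarrow> 'd \<times> 'e \<Rightarrow> 'd \<times> 'e" where
  "nplus p a b = (fst a + fst b, p (snd a) (snd b))"
definition ntimes :: "('e \<Rightarrow> 'e \<Rightarrow> 'e) \<Rightarrow> ('d::comm_semiring_1 \<Rightarrow> 'e \<Rightarrow> 'e) \<Rightarrow> 'd \<times> 'e \<Rightarrow> 'd \<times> 'e \<Rightarrow> 'd \<times> 'e" where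
  "ntimes p s a b = (fst a * fst b, p (s (fst a) (snd b)) (s (fst b) (snd a)))"

definition fmap :: "('e \<Rightarrow> 'e2) \<Rightarrow> 'd \<times> 'e \<Rightarrow> 'd \<times> 'e2" where
  "fmap h a = (fst a, h (snd a))"

definition abstractD :: "'e \<Rightarrow> ('e \<Rightarrow> 'e \<Rightarrow> 'e) \<Rightarrow> ('d::comm_semiring_1 \<Rightarrow> 'e \<Rightarrow> 'e) \<Rightarrow> ('v \<Rightarrow> 'e)
    \<Rightarrow> ('v \<Rightarrow> 'd) \<Rightarrow> 'v expr \<Rightarrow> 'd \<times> 'e" where
  "abstractD z p s delta var = eval (nzero z) (none z) (nplus p) (ntimes p s) (\<lambda>x. (var x, delta x))"

definition dense_zero :: "'v \<Rightarrow> 'd::comm_semiring_1" where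
  "dense_zero = (\<lambda>_. 0)"
definition dense_plus :: "('v \<Rightarrow> 'd::comm_semiring_1) \<Rightarrow> ('v \<Rightarrow> 'd) \<Rightarrow> 'v \<Rightarrow> 'd" where
  "dense_plus f g = (\<lambda>v. f v + g v)"
definition dense_smult :: "'d::comm_semiring_1 \<Rightarrow> ('v \<Rightarrow> 'd) \<Rightarrow> 'v \<Rightarrow> 'd" where
  "dense_smult d f = (\<lambda>v. d * f v)"
definition dense_delta :: "'v \<Rightarrow> 'v \<Rightarrow> 'd::comm_semiring_1" where
  "dense_delta v = (\<lambda>w. if w = v then 1 else 0)"

definition kron_hom ::
  "'e1 \<Rightarrow> ('e1 \<Rightarrow> 'e1 \<Rightarrow> 'e1) \<Rightarrow> ('d::comm_semiring_1 \<Rightarrow> 'e1 \<Rightarrow> 'e1) \<Rightarrow> ('v \<Rightarrow> 'e1) \<Rightarrow>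
   'e2 \<Rightarrow> ('e2 \<Rightarrow> 'e2 \<Rightarrow> 'e2) \<Rightarrow> ('d \<Rightarrow> 'e2 \<Rightarrow> 'e2) \<Rightarrow> ('v \<Rightarrow> 'e2) \<Rightarrow> ('e1 \<Rightarrow> 'e2) \<Rightarrow> bool" where
  "kron_hom z1 p1 s1 d1 z2 p2 s2 d2 h \<longleftrightarrow>
     h z1 = z2 \<and> (\<forall>x y. h (p1 x y) = p2 (h x) (h y)) \<and>
     (\<forall>d m. h (s1 d m) = s2 d (h m)) \<and> (\<forall>v. h (d1 v) = d2 v)"

definition kron_iso ::
  "'e1 \<Rightarrow> ('e1 \<Rightarrow> 'e1 \<Rightarrow> 'e1) \<Rightarrow> ('d::comm_semiring_1 \<Rightarrow> 'e1 \<Rightarrow> 'e1) \<Rightarrow> ('v \<Rightarrow> 'e1) \<Rightarrow>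
   'e2 \<Rightarrow> ('e2 \<Rightarrow> 'e2 \<Rightarrow> 'e2) \<Rightarrow> ('d \<Rightarrow> 'e2 \<Rightarrow> 'e2) \<Rightarrow> ('v \<Rightarrow> 'e2) \<Rightarrow>
   ('e1 \<Rightarrow> 'e2) \<Rightarrow> ('e2 \<Rightarrow> 'e1) \<Rightarrow> bool" where
  "kron_iso z1 p1 s1 d1 z2 p2 s2 d2 h k \<longleftrightarrow>
     kron_hom z1 p1 s1 d1 z2 p2 s2 d2 h \<and> kron_hom z2 p2 s2 d2 z1 p1 s1 d1 k \<and>
     (\<forall>x. k (h x) = x) \<and> (\<forall>y. h (k y) = y)"

end

theory Submission
  imports Defs
begin

text \<open>A Kronecker homomorphism h makes fmap h a homomorphism of Nagata numbers that maps the
  generators N(var x, delta1 x) to N(var x, delta2 x); since abstractD is evaluation of expressions at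
  these generators, fmap h commutes with it. Applying this to both halves of a Kronecker isomorphism
  gives the two equations.\<close>

lemma eval_hom:
  assumes "f z = z'" and "f u = u'"
    and "\<And>a b. f (p a b) = p' (f a) (f b)"
    and "\<And>a b. f (t a b) = t' (f a) (f b)"
  shows "f (eval z u p t g e) = eval z' u' p' t' (f \<circ> g) e"
  by (induction e) (simp_all add: assms)

lemma
  assumes "kron_hom z1 p1 s1 d1 z2 p2 s2 d2 h"
  shows fmap_nzero: "fmap h (nzero z1) = nzero z2"
    and fmap_none: "fmap h (none z1) = none z2"
    and fmap_nplus: "fmap h (nplus p1 a b) = nplus p2 (fmap h a) (fmap h b)"
    and fmap_ntimes: "fmap h (ntimes p1 s1 a b) = ntimes p2 s2 (fmap h a) (fmap h b)"
  using assms
  by (simp_all add: kron_hom_def fmap_def nzero_def none_def nplus_def ntimes_def)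

lemma fmap_abstractD:
  assumes "kron_hom z1 p1 s1 d1 z2 p2 s2 d2 h"
  shows "fmap h (abstractD z1 p1 s1 d1 var e) = abstractD z2 p2 s2 d2 var e"
proof -
  have generators: "fmap h \<circ> (\<lambda>x. (var x, d1 x)) = (\<lambda>x. (var x, d2 x))"
    using assms by (simp add: kron_hom_def fmap_def comp_def)
  show ?thesis
    unfolding abstractD_def
    by (subst eval_hom[where f = "fmap h"])
      (simp_all add: fmap_nzero[OF assms] fmap_none[OF assms] fmap_nplus[OF assms]
        fmap_ntimes[OF assms] generators)
qed

theorem theorem2:
  fixes zE :: "'e" and pE :: "'e \<Rightarrow> 'e \<Rightarrow> 'e" and sE :: "'d::comm_semiring_1 \<Rightarrow> 'e \<Rightarrow> 'e"
    and deltaE :: "'v \<Rightarrow> 'e"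
    and rep :: "('v \<Rightarrow> 'd) \<Rightarrow> 'e" and abs :: "'e \<Rightarrow> ('v \<Rightarrow> 'd)"
  assumes "is_module zE pE sE"
    and "kron_iso dense_zero dense_plus dense_smult dense_delta zE pE sE deltaE rep abs"
  shows "\<forall>(var :: 'v \<Rightarrow> 'd) (e :: 'v expr).
     fmap abs (abstractD zE pE sE deltaE var e)
       = abstractD dense_zero dense_plus dense_smult dense_delta var e \<and>
     abstractD zE pE sE deltaE var e
       = fmap rep (abstractD dense_zero dense_plus dense_smult dense_delta var e)"
proof -
  have "kron_hom zE pE sE deltaE dense_zero dense_plus dense_smult dense_delta abs"
    and "kron_hom dense_zero dense_plus dense_smult dense_delta zE pE sE deltaE rep"
    using assms(2) by (simp_all add: kron_iso_def)
  then show ?thesis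
    by (simp add: fmap_abstractD)
qed

end
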